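(* Let $n\geq 3$, let $H$ be a $1$-dimensional linear subspace of $\mathbb{R}^n$, and let $O(n)_H=\{\psi\in O(n): \psi x=x \text{ for all } x\in H\}$ be its pointwise stabilizer in $O(n)$. Let $\phi\in O(n)$ be such that $\phi H\neq H$. If $E\subset S^{n-1}$ is nonempty, closed, and satisfies $\phi E=E$ and $\psi E=E$ for every $\psi\in O(n)_H$, then $E=S^{n-1}$.
   Context: $S^{n-1}$ is the unit sphere in $\mathbb{R}^n$ and $O(n)$ the orthogonal group. *)

theory Defs
  imports "HOL-Analysis.Analysis"
begin

definition pointwise_stabilizer :: "('a::real_inner) set \<Rightarrow> ('a \<Rightarrow> 'a) set" where
  "pointwise_stabilizer H = {\<psi>. orthogonal_transformation \<psi> \<and> (\<forall>x\<in>H. \<psi> x = x)}"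

end

theory Submission
  imports Defs
begin

text \<open>Write \<open>H = span {u}\<close> with \<open>u\<close> a unit vector and put \<open>v = \<phi> u\<close>, so that
  \<open>\<bar>u \<bullet> v\<bar> < 1\<close>. Reflections in hyperplanes containing \<open>H\<close> lie in the stabilizer, hence
  \<open>E\<close> is a union of the latitude sets \<open>{y \<in> S\<^sup>n\<^sup>-\<^sup>1. y \<bullet> u = t}\<close> and is determined by the
  closed set \<open>T = {x \<bullet> u | x \<in> E} \<subseteq> [-1, 1]\<close>. Applying \<open>\<phi>\<close> shows that \<open>t \<in> T\<close> implies
  \<open>s \<in> T\<close> whenever some unit vector \<open>y\<close> has \<open>y \<bullet> u = t\<close> and \<open>y \<bullet> v = s\<close>; as \<open>n \<ge> 3\<close>, such a
  \<open>y\<close> exists exactly when the Gram determinant of \<open>u, v, y\<close> is nonnegative. This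
  closure property makes \<open>T \<inter> ]-1, 1[\<close> nonempty, open and closed in \<open>]-1, 1[\<close>, so by
  connectedness \<open>T = [-1, 1]\<close> and \<open>E\<close> is the whole sphere.\<close>

text \<open>The Gram determinant of three unit vectors with pairwise inner products \<open>c\<close>, \<open>p\<close>, \<open>q\<close>.\<close>
definition unit_gram_det :: "real \<Rightarrow> real \<Rightarrow> real \<Rightarrow> real" where
  "unit_gram_det c p q = 1 - c\<^sup>2 - p\<^sup>2 - q\<^sup>2 + 2 * c * p * q"

lemma unit_gram_det_commute: "unit_gram_det c p q = unit_gram_det c q p"
  by (simp add: unit_gram_det_def algebra_simps)

lemma unit_gram_det_mult_self: "unit_gram_det c p (c * p) = (1 - c\<^sup>2) * (1 - p\<^sup>2)"
  by (simp add: unit_gram_det_def power2_eq_square algebra_simps)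

lemma closed_under_unit_gram_eq_interval:
  fixes T :: "real set"
  assumes "closed T" "T \<noteq> {}" "T \<subseteq> {-1..1}" and "\<bar>c\<bar> < 1"
    and closed_under: "\<And>p q. p \<in> T \<Longrightarrow> unit_gram_det c p q \<ge> 0 \<Longrightarrow> q \<in> T"
  shows "T = {-1..1}"
proof -
  define S where "S = {-1<..<1::real}"
  have c2: "c\<^sup>2 < 1"
    using \<open>\<bar>c\<bar> < 1\<close> by (simp add: abs_square_less_1)
  have mult_c_in: "c * p \<in> T" if "p \<in> T" for p
  proof -
    have "p\<^sup>2 \<le> 1"
      using that \<open>T \<subseteq> {-1..1}\<close> by (force simp: abs_square_le_1 abs_le_iff)
    then show ?thesis
      using closed_under[OF that] c2 by (simp add: unit_gram_det_mult_self)
  qed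
  \<comment> \<open>\<open>S \<inter> T\<close> is open in \<open>S\<close>: each of its points \<open>p\<close> is reached from \<open>c * p \<in> T\<close> with
    a strictly positive determinant.\<close>
  have "S \<inter> T = S \<inter> (\<Union>q\<in>T. {p. unit_gram_det c q p > 0})"
  proof (intro equalityI subsetI)
    fix p assume p: "p \<in> S \<inter> T"
    then have "p\<^sup>2 < 1"
      by (auto simp: S_def abs_square_less_1 abs_less_iff)
    then have "unit_gram_det c (c * p) p > 0"
      using c2 by (simp add: unit_gram_det_commute[of c] unit_gram_det_mult_self)
    then show "p \<in> S \<inter> (\<Union>q\<in>T. {p. unit_gram_det c q p > 0})"
      using p mult_c_in by blast
  qed (use closed_under in \<open>auto intro: less_imp_le\<close>)
  moreover have "open (\<Union>q\<in>T. {p. unit_gram_det c q p > 0})"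
    unfolding unit_gram_det_def
    by (intro open_UN ballI open_Collect_less) (auto intro!: continuous_intros)
  ultimately have "openin (top_of_set S) (S \<inter> T)"
    by (simp add: openin_open_Int)
  moreover have "closedin (top_of_set S) (S \<inter> T)"
    using \<open>closed T\<close> by (simp add: closedin_closed_Int)
  moreover have "S \<inter> T \<noteq> {}"
  proof -
    obtain p where "p \<in> T"
      using \<open>T \<noteq> {}\<close> by blast
    then have "\<bar>p\<bar> \<le> 1"
      using \<open>T \<subseteq> {-1..1}\<close> by (auto simp: abs_le_iff)
    then have "\<bar>c * p\<bar> < 1"
      using \<open>\<bar>c\<bar> < 1\<close> by (simp add: abs_mult le_less_trans[OF mult_left_le])
    then show ?thesis
      using mult_c_in[OF \<open>p \<in> T\<close>] by (auto simp: S_def abs_less_iff)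
  qed
  ultimately have "S \<subseteq> T"
    using connected_clopen[of S] by (auto simp: S_def)
  then have "closure S \<subseteq> T"
    using \<open>closed T\<close> by (simp add: closure_minimal)
  then show ?thesis
    using \<open>T \<subseteq> {-1..1}\<close> by (auto simp: S_def)
qed

lemma unit_vector_orthogonal_to_pair_exists:
  fixes u v :: "'a::euclidean_space"
  assumes "DIM('a) \<ge> 3"
  obtains w where "norm w = 1" "w \<bullet> u = 0" "w \<bullet> v = 0"
proof -
  have "dim {u, v} \<le> card {u, v}"
    by (rule dim_le_card) (auto intro: span_base)
  also have "\<dots> < DIM('a)"
    using assms by (cases "u = v") auto
  finally obtain w where "w \<noteq> 0" "\<And>y. y \<in> span {u, v} \<Longrightarrow> orthogonal w y"
    using orthogonal_to_subspace_exists by blast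
  then show thesis
    by (intro that[of "w /\<^sub>R norm w"]) (auto simp: orthogonal_def span_base)
qed

lemma unit_vector_with_inner_products_exists:
  fixes u v :: "'a::euclidean_space"
  assumes "DIM('a) \<ge> 3" "norm u = 1" "norm v = 1" "\<bar>u \<bullet> v\<bar> < 1"
    and "unit_gram_det (u \<bullet> v) p q \<ge> 0"
  obtains y where "norm y = 1" "y \<bullet> u = p" "y \<bullet> v = q"
proof -
  define c where "c = u \<bullet> v"
  have uu: "u \<bullet> u = 1" and vv: "v \<bullet> v = 1"
    using assms(2,3) by (simp_all add: norm_eq_1)
  have c2: "0 < 1 - c\<^sup>2"
    using assms(4) by (simp add: abs_square_less_1 c_def)
  obtain w where w: "norm w = 1" "w \<bullet> u = 0" "w \<bullet> v = 0"
    using unit_vector_orthogonal_to_pair_exists assms(1) by blast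
  define e where "e = v - c *\<^sub>R u"
  have eu: "e \<bullet> u = 0"
    by (simp add: e_def inner_diff_left uu c_def inner_commute[of v u])
  have ev: "e \<bullet> v = 1 - c\<^sup>2"
    by (simp add: e_def inner_diff_left vv c_def power2_eq_square)
  have ee: "e \<bullet> e = 1 - c\<^sup>2"
    using eu ev by (simp add: e_def inner_diff_right inner_commute[of u e])
  have we: "w \<bullet> e = 0"
    using w by (simp add: e_def inner_diff_right)
  define a where "a = (q - c * p) / (1 - c\<^sup>2)"
  \<comment> \<open>The nonnegative determinant is exactly what makes the \<open>w\<close>-coefficient real.\<close>
  define b where "b = sqrt (unit_gram_det c p q / (1 - c\<^sup>2))"
  have b2: "b\<^sup>2 = unit_gram_det c p q / (1 - c\<^sup>2)"
    using assms(5) c2 by (simp add: b_def c_def)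
  define y where "y = p *\<^sub>R u + a *\<^sub>R e + b *\<^sub>R w"
  have "y \<bullet> u = p"
    using eu w uu by (simp add: y_def inner_add_left)
  moreover have "y \<bullet> v = q"
    using ev w c2 by (simp add: y_def inner_add_left c_def a_def)
  moreover have "y \<bullet> y = 1"
  proof -
    have "y \<bullet> y = p\<^sup>2 + a\<^sup>2 * (e \<bullet> e) + b\<^sup>2"
      using eu w we uu norm_eq_1[of w]
      by (simp add: y_def inner_add_left inner_add_right inner_commute power2_eq_square algebra_simps)
    also have "\<dots> = p\<^sup>2 + ((q - c * p)\<^sup>2 + unit_gram_det c p q) / (1 - c\<^sup>2)"
      using c2 unfolding ee b2 a_def
      by (simp add: power_divide power2_eq_square add_divide_distrib)
    also have "(q - c * p)\<^sup>2 + unit_gram_det c p q = (1 - c\<^sup>2) * (1 - p\<^sup>2)"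
      by (simp add: unit_gram_det_def power2_eq_square algebra_simps)
    finally show ?thesis
      using c2 by simp
  qed
  ultimately show thesis
    by (intro that) (simp_all add: norm_eq_1)
qed

text \<open>For \<open>w = 0\<close> the division by zero makes this the identity.\<close>
definition reflect_along :: "'a::real_inner \<Rightarrow> 'a \<Rightarrow> 'a" where
  "reflect_along w z = z - (2 * (z \<bullet> w) / (w \<bullet> w)) *\<^sub>R w"

lemma orthogonal_transformation_reflect_along:
  "orthogonal_transformation (reflect_along w)"
proof (cases "w = 0")
  case True
  then have "reflect_along w = (\<lambda>z. z)"
    by (simp add: reflect_along_def fun_eq_iff)
  then show ?thesis
    by simp
next
  case False
  have "linear (reflect_along w)"
    unfolding reflect_along_def
    by (rule linearI) (auto simp: inner_add_left algebra_simps add_divide_distrib)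
  moreover have "reflect_along w a \<bullet> reflect_along w b = a \<bullet> b" for a b
    using False
    by (simp add: reflect_along_def inner_diff_left inner_diff_right inner_commute
        field_simps power2_eq_square)
  ultimately show ?thesis
    by (simp add: orthogonal_transformation_def)
qed

lemma reflect_along_orthogonal: "z \<bullet> w = 0 \<Longrightarrow> reflect_along w z = z"
  by (simp add: reflect_along_def)

lemma reflect_along_diff:
  assumes "norm x = norm y"
  shows "reflect_along (x - y) x = y"
proof (cases "x = y")
  case False
  have "x \<bullet> x = y \<bullet> y"
    using assms by (simp add: dot_square_norm)
  then have "(x - y) \<bullet> (x - y) = 2 * (x \<bullet> (x - y))"
    by (simp add: inner_diff_left inner_diff_right inner_commute)
  moreover have "(x - y) \<bullet> (x - y) \<noteq> 0"
    using False by simp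
  ultimately have "2 * (x \<bullet> (x - y)) / ((x - y) \<bullet> (x - y)) = 1"
    by (metis divide_self)
  then have "reflect_along (x - y) x = x - 1 *\<^sub>R (x - y)"
    unfolding reflect_along_def by (simp only:)
  then show ?thesis
    by simp
qed (simp add: reflect_along_def)

lemma stabilizer_invariant_latitude:
  fixes E :: "'a::real_inner set"
  assumes invariant: "\<And>\<psi>. \<psi> \<in> pointwise_stabilizer (span {u}) \<Longrightarrow> \<psi> ` E = E"
    and "x \<in> E" "norm y = norm x" "y \<bullet> u = x \<bullet> u"
  shows "y \<in> E"
proof -
  have "reflect_along (x - y) h = h" if "h \<in> span {u}" for h
  proof -
    obtain k where "h = k *\<^sub>R u"
      using \<open>h \<in> span {u}\<close> by (auto simp: span_singleton)
    then have "h \<bullet> (x - y) = 0"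
      using \<open>y \<bullet> u = x \<bullet> u\<close> by (simp add: inner_diff_right inner_commute)
    then show ?thesis
      by (rule reflect_along_orthogonal)
  qed
  then have "reflect_along (x - y) \<in> pointwise_stabilizer (span {u})"
    unfolding pointwise_stabilizer_def using orthogonal_transformation_reflect_along by blast
  then have "reflect_along (x - y) ` E = E"
    by (rule invariant)
  moreover have "reflect_along (x - y) x = y"
    using \<open>norm y = norm x\<close> by (rule reflect_along_diff[OF sym])
  ultimately show ?thesis
    using \<open>x \<in> E\<close> by (metis imageI)
qed

lemma subspace_dim_1_eq_span_unit:
  fixes H :: "'a::euclidean_space set"
  assumes "subspace H" "dim H = 1"
  obtains u where "norm u = 1" "H = span {u}"
proof -
  have "\<not> H \<subseteq> {0}"
    using assms(2) dim_eq_0 by (metis zero_neq_one)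
  then obtain b where "b \<in> H" "b \<noteq> 0"
    by blast
  define u where "u = b /\<^sub>R norm b"
  have "u \<in> H"
    unfolding u_def by (rule subspace_scale[OF assms(1) \<open>b \<in> H\<close>])
  have "norm u = 1"
    using \<open>b \<noteq> 0\<close> by (simp add: u_def)
  moreover have "span {u} = H"
  proof (rule subspace_dim_equal[OF subspace_span assms(1)])
    show "span {u} \<subseteq> H"
      using \<open>u \<in> H\<close> by (intro span_minimal[OF _ assms(1)]) simp
    have "u \<noteq> 0"
      using \<open>norm u = 1\<close> by auto
    then show "dim H \<le> dim (span {u})"
      using assms(2) by (simp only: dim_span dim_singleton if_False order_refl)
  qed
  ultimately show thesis
    using that by blast
qed

lemma abs_inner_less_1_if_span_neq:
  fixes u v :: "'a::real_inner"
  assumes "norm u = 1" "norm v = 1" "span {u} \<noteq> span {v}"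
  shows "\<bar>u \<bullet> v\<bar> < 1"
proof (rule ccontr)
  assume "\<not> \<bar>u \<bullet> v\<bar> < 1"
  then have "\<bar>u \<bullet> v\<bar> = norm u * norm v"
    using Cauchy_Schwarz_ineq2[of u v] assms(1,2) by simp
  then have "v = u \<or> v = - u"
    using norm_cauchy_schwarz_abs_eq[of u v] assms(1,2) by auto
  then have "span {v} = span {u}"
  proof
    assume "v = - u"
    then show ?thesis
      using span_neg[of u "{u}"] span_neg[of "- u" "{- u}"] by (simp add: span_eq span_base)
  qed simp
  with assms(3) show False
    by simp
qed

lemma latitude_saturated_eq_sphere:
  fixes E :: "'a::euclidean_space set" and u v :: 'a
  assumes "DIM('a) \<ge> 3" "norm u = 1" "norm v = 1" "\<bar>u \<bullet> v\<bar> < 1"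
    and "E \<subseteq> sphere 0 1" "E \<noteq> {}" "closed E"
    and latitude: "\<And>x y. x \<in> E \<Longrightarrow> norm y = 1 \<Longrightarrow> y \<bullet> u = x \<bullet> u \<Longrightarrow> y \<in> E"
    and transfer: "\<And>y. y \<in> E \<Longrightarrow> y \<bullet> v \<in> (\<lambda>x. x \<bullet> u) ` E"
  shows "E = sphere 0 1"
proof -
  define T where "T = (\<lambda>x. x \<bullet> u) ` E"
  have "compact E"
    using assms(5,7) bounded_subset[OF bounded_sphere] by (simp add: compact_eq_bounded_closed)
  then have "closed T"
    unfolding T_def by (intro compact_imp_closed compact_continuous_image continuous_intros)
  have abs_inner_le: "\<bar>y \<bullet> u\<bar> \<le> 1" if "norm y = 1" for y
    using Cauchy_Schwarz_ineq2[of y u] that assms(2) by simp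
  then have "T \<subseteq> {-1..1}"
    using assms(5) by (auto simp: T_def abs_le_iff)
  moreover have "q \<in> T" if "p \<in> T" and gram: "unit_gram_det (u \<bullet> v) p q \<ge> 0" for p q
  proof -
    obtain y where y: "norm y = 1" "y \<bullet> u = p" "y \<bullet> v = q"
      using unit_vector_with_inner_products_exists[OF assms(1-4) gram] by blast
    obtain x where "x \<in> E" "p = x \<bullet> u"
      using \<open>p \<in> T\<close> by (auto simp: T_def)
    then have "y \<in> E"
      using latitude y by blast
    then show ?thesis
      using transfer y by (auto simp: T_def)
  qed
  ultimately have T: "T = {-1..1}"
    using closed_under_unit_gram_eq_interval \<open>closed T\<close> assms(4,6) by (simp add: T_def)
  show ?thesis
  proof
    show "sphere 0 1 \<subseteq> E"
    proof
      fix y :: 'a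
      assume "y \<in> sphere 0 1"
      then have "norm y = 1" "y \<bullet> u \<in> T"
        using abs_inner_le by (auto simp: T abs_le_iff)
      then show "y \<in> E"
        using latitude by (auto simp: T_def)
    qed
  qed (rule assms(5))
qed

theorem lemma3p1:
  fixes H E :: "(real ^ 'n) set" and \<phi> :: "real ^ 'n \<Rightarrow> real ^ 'n"
  assumes "CARD('n) \<ge> 3"
    and "subspace H" and "dim H = 1"
    and "orthogonal_transformation \<phi>" and "\<phi> ` H \<noteq> H"
    and "E \<subseteq> sphere 0 1" and "E \<noteq> {}" and "closed E"
    and "\<phi> ` E = E"
    and "\<And>\<psi>. \<psi> \<in> pointwise_stabilizer H \<Longrightarrow> \<psi> ` E = E"
  shows "E = sphere 0 1"
proof -
  obtain u where u: "norm u = 1" "H = span {u}"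
    using subspace_dim_1_eq_span_unit assms(2,3) by blast
  define v where "v = \<phi> u"
  have "norm v = 1"
    using u(1) assms(4) by (simp add: v_def orthogonal_transformation_norm)
  moreover have "span {u} \<noteq> span {v}"
    using assms(4,5) u(2)
    by (simp add: v_def linear_span_image[symmetric] orthogonal_transformation_linear)
  ultimately have "\<bar>u \<bullet> v\<bar> < 1"
    using abs_inner_less_1_if_span_neq[OF u(1)] by blast
  moreover have "y \<in> E" if "x \<in> E" "norm y = 1" "y \<bullet> u = x \<bullet> u" for x y
    using stabilizer_invariant_latitude[of u E x y] assms(6,10) u(2) that by auto
  moreover have "y \<bullet> v \<in> (\<lambda>x. x \<bullet> u) ` E" if "y \<in> E" for y
  proof -
    obtain z where "z \<in> E" "y = \<phi> z"
      using \<open>y \<in> E\<close> assms(9) by blast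
    then show ?thesis
      using assms(4) by (auto simp: v_def orthogonal_transformation_def)
  qed
  ultimately show ?thesis
    using latitude_saturated_eq_sphere[of u v E] assms(1,6-8) u(1) \<open>norm v = 1\<close> by simp
qed

end
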